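(* Let $m\ge 1$ and consider the labeled chip-firing process on $\mathbb{Z}$ starting with $2m$ chips labeled $-m,\dots,-1,1,\dots,m$ at site $0$. In any sequence of firing moves, at every point of the process: for each label $k<0$, the position of chip $k$ is at most $k+m$; and for each label $k>0$, the position of chip $k$ is at least $k-m$.
   Context: Labeled chip-firing on the infinite path graph $\mathbb{Z}$ (each integer $i$ adjacent to $i-1$ and $i+1$): a firing move consists of choosing two chips with labels $a<b$ located at a common site $i$, and moving chip $a$ to site $i-1$ and chip $b$ to site $i+1$. *)

theory Defs
  imports Main
begin

text \<open>Labeled chip-firing on the path graph Z. A configuration maps each chip label
to its current site. The chips are labeled -m,...,-1,1,...,m.\<close>

definition chip_labels :: "int \<Rightarrow> int set" where
  "chip_labels m = {-m..-1} \<union> {1..m}"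

definition fire_step :: "int \<Rightarrow> (int \<Rightarrow> int) \<Rightarrow> (int \<Rightarrow> int) \<Rightarrow> bool" where
  "fire_step m c c' \<longleftrightarrow>
     (\<exists>a b. a \<in> chip_labels m \<and> b \<in> chip_labels m \<and> a < b \<and> c a = c b \<and>
            c' = c(a := c a - 1, b := c b + 1))"

definition init_config :: "int \<Rightarrow> int" where
  "init_config = (\<lambda>_. 0)"

end

theory Submission
  imports Defs
begin

text \<open>Fix a threshold t and let S be the n chips with label at most t. Then for every
site j at most max 0 (n - j) chips of S lie at sites \<ge> j. This is preserved by a
firing at site i: only the count at i + 1 can grow, and only by the chip moving right;
if that chip is in S, so is its partner, so before the move at least two more chips of S
lay at sites \<ge> i than at sites \<ge> i + 1. For t = k < 0 we have n = k + m + 1, and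
chip k itself is counted at its own site, which forces c k \<le> k + m. The bound for
positive labels follows by reflecting labels and sites.\<close>

definition low_chips :: "int \<Rightarrow> int \<Rightarrow> int set" where
  "low_chips m t = {a \<in> chip_labels m. a \<le> t}"

definition low_chips_from :: "int \<Rightarrow> int \<Rightarrow> (int \<Rightarrow> int) \<Rightarrow> int \<Rightarrow> int set" where
  "low_chips_from m t c j = {a \<in> low_chips m t. j \<le> c a}"

definition spread_bounded :: "int \<Rightarrow> int \<Rightarrow> (int \<Rightarrow> int) \<Rightarrow> bool" where
  "spread_bounded m t c \<longleftrightarrow>
     (\<forall>j. int (card (low_chips_from m t c j)) \<le> max 0 (int (card (low_chips m t)) - j))"

lemma finite_low_chips [simp]: "finite (low_chips m t)"
  unfolding low_chips_def chip_labels_def by auto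

lemma finite_low_chips_from [simp]: "finite (low_chips_from m t c j)"
  unfolding low_chips_from_def by simp

lemma card_low_chips_neg:
  assumes "k \<in> chip_labels m" "k < 0"
  shows "int (card (low_chips m k)) = k + m + 1"
proof -
  have "low_chips m k = {-m..k}"
    using assms unfolding low_chips_def chip_labels_def by auto
  then show ?thesis
    using assms unfolding chip_labels_def by auto
qed

lemma spread_bounded_init: "spread_bounded m t init_config"
  unfolding spread_bounded_def
proof
  fix j :: int
  show "int (card (low_chips_from m t init_config j)) \<le> max 0 (int (card (low_chips m t)) - j)"
  proof (cases "j \<le> 0")
    case True
    then have "low_chips_from m t init_config j = low_chips m t"
      unfolding low_chips_from_def init_config_def by simp
    then show ?thesis
      using True by simp
  next
    case False
    then have "low_chips_from m t init_config j = {}"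
      unfolding low_chips_from_def init_config_def by simp
    then show ?thesis
      by simp
  qed
qed

lemma spread_bounded_fire_step:
  assumes step: "fire_step m c d" and bounded: "spread_bounded m t c"
  shows "spread_bounded m t d"
proof -
  obtain a b where ab: "a \<in> chip_labels m" "a < b" "c a = c b"
    and d: "d = c(a := c a - 1, b := c b + 1)"
    using step unfolding fire_step_def by blast
  define i where "i = c a"
  define n where "n = int (card (low_chips m t))"
  let ?C = "low_chips_from m t c" and ?D = "low_chips_from m t d"
  have bound: "int (card (?C j)) \<le> max 0 (n - j)" for j
    using bounded unfolding spread_bounded_def n_def by blast
  have moved_right: "?D j \<subseteq> insert b (?C j)" for j
    using ab(2,3) unfolding d low_chips_from_def by auto
  have unchanged: "?D j \<subseteq> ?C j" if "j \<noteq> i + 1" for j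
    using ab(2,3) that unfolding d low_chips_from_def i_def by auto
  show ?thesis
    unfolding spread_bounded_def n_def[symmetric]
  proof
    fix j
    show "int (card (?D j)) \<le> max 0 (n - j)"
    proof (cases "j = i + 1 \<and> b \<in> low_chips m t")
      case False
      then have "?D j \<subseteq> ?C j"
        using unchanged moved_right[of j] unfolding low_chips_from_def by blast
      then have "card (?D j) \<le> card (?C j)"
        by (simp add: card_mono)
      then show ?thesis
        using bound[of j] by linarith
    next
      case True
      then have "a \<in> low_chips m t"
        using ab(1,2) unfolding low_chips_def by auto
      then have "insert a (insert b (?C j)) \<subseteq> ?C i"
        using True ab(3) unfolding low_chips_from_def i_def by auto
      moreover have "a \<notin> ?C j" "b \<notin> ?C j" "a \<noteq> b"
        using True ab(2,3) unfolding low_chips_from_def i_def by auto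
      ultimately have two_more: "card (?C j) + 2 \<le> card (?C i)"
        using card_mono[of "?C i" "insert a (insert b (?C j))"] by simp
      have "card (?D j) \<le> card (?C j) + 1"
        using card_mono[OF _ moved_right[of j]] by (simp add: card_insert_if split: if_splits)
      then show ?thesis
        using two_more bound[of i] True by linarith
    qed
  qed
qed

lemma spread_bounded_reachable:
  assumes "(fire_step m)\<^sup>*\<^sup>* c d" "spread_bounded m t c"
  shows "spread_bounded m t d"
  using assms by induction (auto intro: spread_bounded_fire_step)

lemma position_less_card_low_chips:
  assumes "spread_bounded m t c" "a \<in> low_chips m t"
  shows "c a < int (card (low_chips m t))"
proof -
  have "a \<in> low_chips_from m t c (c a)"
    using assms(2) unfolding low_chips_from_def by simp
  then have "0 < card (low_chips_from m t c (c a))"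
    by (auto simp: card_gt_0_iff)
  moreover have "int (card (low_chips_from m t c (c a))) \<le> max 0 (int (card (low_chips m t)) - c a)"
    using assms(1) unfolding spread_bounded_def by blast
  ultimately show ?thesis
    by linarith
qed

lemma negative_chip_bound:
  assumes "(fire_step m)\<^sup>*\<^sup>* init_config c" "k \<in> chip_labels m" "k < 0"
  shows "c k \<le> k + m"
proof -
  have "spread_bounded m k c"
    using spread_bounded_reachable[OF assms(1) spread_bounded_init] .
  moreover have "k \<in> low_chips m k"
    using assms(2) unfolding low_chips_def by simp
  ultimately show ?thesis
    using position_less_card_low_chips card_low_chips_neg[OF assms(2,3)] by fastforce
qed

definition mirror_config :: "(int \<Rightarrow> int) \<Rightarrow> int \<Rightarrow> int" where
  "mirror_config c = (\<lambda>a. - c (- a))"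

lemma uminus_chip_labels_iff [simp]: "- a \<in> chip_labels m \<longleftrightarrow> a \<in> chip_labels m"
  unfolding chip_labels_def by auto

lemma mirror_init_config [simp]: "mirror_config init_config = init_config"
  unfolding mirror_config_def init_config_def by simp

lemma fire_step_mirror:
  assumes "fire_step m c d"
  shows "fire_step m (mirror_config c) (mirror_config d)"
proof -
  obtain a b where ab: "a \<in> chip_labels m" "b \<in> chip_labels m" "a < b" "c a = c b"
    and d: "d = c(a := c a - 1, b := c b + 1)"
    using assms unfolding fire_step_def by blast
  let ?c' = "mirror_config c"
  have "mirror_config d = ?c'(- b := ?c' (- b) - 1, - a := ?c' (- a) + 1)"
    using ab(3,4) unfolding d mirror_config_def by (auto simp: fun_eq_iff)
  moreover have "?c' (- b) = ?c' (- a)"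
    using ab(4) unfolding mirror_config_def by simp
  ultimately show ?thesis
    unfolding fire_step_def using ab(1-3) by (metis neg_less_iff_less uminus_chip_labels_iff)
qed

lemma reachable_mirror:
  assumes "(fire_step m)\<^sup>*\<^sup>* c d"
  shows "(fire_step m)\<^sup>*\<^sup>* (mirror_config c) (mirror_config d)"
  using assms by induction (auto intro: rtranclp.rtrancl_into_rtrancl fire_step_mirror)

theorem lemma2p8:
  fixes m :: int and c :: "int \<Rightarrow> int"
  assumes "m \<ge> 1"
    and "(fire_step m)\<^sup>*\<^sup>* init_config c"
  shows "(\<forall>k \<in> chip_labels m. k < 0 \<longrightarrow> c k \<le> k + m) \<and>
         (\<forall>k \<in> chip_labels m. k > 0 \<longrightarrow> c k \<ge> k - m)"
proof (intro conjI ballI impI)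
  fix k assume "k \<in> chip_labels m" "k < 0"
  then show "c k \<le> k + m"
    using negative_chip_bound assms(2) by blast
next
  fix k assume k: "k \<in> chip_labels m" "k > 0"
  have "(fire_step m)\<^sup>*\<^sup>* init_config (mirror_config c)"
    using reachable_mirror[OF assms(2)] by simp
  then have "mirror_config c (- k) \<le> - k + m"
    using negative_chip_bound[of m "mirror_config c" "- k"] k by simp
  then show "c k \<ge> k - m"
    unfolding mirror_config_def by simp
qed

end
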